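(* Let $k\geq2$ be an integer. Suppose $\mu$ is a constant sum strong Rayleigh measure on $2^{[n]}$ such that $$\mathbb{P}[S:i\in S]=\sum_{S\ni i}\mu(\{S\})\leq\Big(\frac1{\sqrt{k-1}}-\frac1{\sqrt k}\Big)^2$$ for all $1\leq i\leq n$. Then the support of $\mu$ contains $k$ pairwise disjoint sets (i.e. the matroid whose set of bases is the support of $\mu$ has $k$ disjoint bases).
   Context: A discrete probability measure $\mu$ on $2^{[n]}$ has multivariate partition function $P_\mu(\mathbf{x})=\sum_{S\subseteq[n]}\mu(\{S\})\prod_{j\in S}x_j$; $\mu$ is strong Rayleigh if $P_\mu(\mathbf{x})\neq0$ whenever $\operatorname{Im}(x_j)>0$ for all $j$, and of constant sum $d$ if $|S|=d$ whenever $\mu(\{S\})\neq0$. The support of $\mu$ is $\{S:\mu(\{S\})>0\}$; for a constant sum strong Rayleigh measure the support is the set of bases of a matroid on $[n]$. *)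

theory Defs
  imports Complex_Main
begin

text \<open>A discrete probability measure on 2^[n], [n] = {1..n}, given by its point masses
  mu S for S \<subseteq> {1..n} (values of mu on other sets are irrelevant).\<close>
definition prob_measure_on :: "nat \<Rightarrow> (nat set \<Rightarrow> real) \<Rightarrow> bool" where
  "prob_measure_on n mu \<longleftrightarrow>
     (\<forall>S. S \<subseteq> {1..n} \<longrightarrow> mu S \<ge> 0) \<and> (\<Sum>S\<in>Pow {1..n}. mu S) = 1"

definition partition_fn :: "nat \<Rightarrow> (nat set \<Rightarrow> real) \<Rightarrow> (nat \<Rightarrow> complex) \<Rightarrow> complex" where
  "partition_fn n mu x = (\<Sum>S\<in>Pow {1..n}. complex_of_real (mu S) * (\<Prod>j\<in>S. x j))"

definition strong_rayleigh :: "nat \<Rightarrow> (nat set \<Rightarrow> real) \<Rightarrow> bool" where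
  "strong_rayleigh n mu \<longleftrightarrow>
     (\<forall>x. (\<forall>j\<in>{1..n}. Im (x j) > 0) \<longrightarrow> partition_fn n mu x \<noteq> 0)"

definition constant_sum :: "nat \<Rightarrow> (nat set \<Rightarrow> real) \<Rightarrow> nat \<Rightarrow> bool" where
  "constant_sum n mu d \<longleftrightarrow> (\<forall>S. S \<subseteq> {1..n} \<longrightarrow> mu S \<noteq> 0 \<longrightarrow> card S = d)"

definition support :: "nat \<Rightarrow> (nat set \<Rightarrow> real) \<Rightarrow> nat set set" where
  "support n mu = {S. S \<subseteq> {1..n} \<and> mu S > 0}"

definition marginal :: "nat \<Rightarrow> (nat set \<Rightarrow> real) \<Rightarrow> nat \<Rightarrow> real" where
  "marginal n mu i = (\<Sum>S\<in>{S\<in>Pow {1..n}. i \<in> S}. mu S)"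

end

(*
  The rank function rk(X) = max |S \<inter> X| over the support is submodular: the polynomial
  t \<mapsto> P(t on X, 1 elsewhere) is log-submodular in X for t \<ge> 1, because its local
  log-submodularity is exactly the Rayleigh inequality implied by real stability, and for large t
  it behaves like t ^ rk(X). Hence the support consists of the bases of a matroid of rank d.
  The marginal bound gives marginals at most 1/k, so for every Z the expected size d - rk(Z) of
  S outside Z is at most |[n] - Z| / k. This is exactly the condition of Edmonds' base packing
  theorem, which we derive from matroid intersection applied to k copies of the matroid and the
  partition matroid using each element once.
*)
theory Submission
  imports Defs
begin

definition partition_eval :: "nat \<Rightarrow> (nat set \<Rightarrow> real) \<Rightarrow> (nat \<Rightarrow> 'a::real_normed_field) \<Rightarrow> 'a" where
  "partition_eval n mu z = (\<Sum>S\<in>Pow {1..n}. of_real (mu S) * (\<Prod>j\<in>S. z j))"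

definition partition_coeff ::
    "nat \<Rightarrow> (nat set \<Rightarrow> real) \<Rightarrow> nat \<Rightarrow> nat \<Rightarrow> bool \<Rightarrow> bool \<Rightarrow> (nat \<Rightarrow> 'a::real_normed_field) \<Rightarrow> 'a" where
  "partition_coeff n mu a b p q z =
     (\<Sum>S\<in>{S\<in>Pow {1..n}. (a \<in> S) = p \<and> (b \<in> S) = q}. of_real (mu S) * (\<Prod>j\<in>S-{a,b}. z j))"

lemma partition_coeff_cong:
  assumes "\<And>j. j \<noteq> a \<Longrightarrow> j \<noteq> b \<Longrightarrow> z j = z' j"
  shows "partition_coeff n mu a b p q z = partition_coeff n mu a b p q z'"
  unfolding partition_coeff_def using assms by (intro sum.cong refl arg_cong2[where f="(*)"] prod.cong) auto

lemma partition_coeff_of_real: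
  "partition_coeff n mu a b p q (\<lambda>j. of_real (y j) :: 'a::real_normed_field) = of_real (partition_coeff n mu a b p q y)"
  unfolding partition_coeff_def of_real_sum of_real_mult of_real_prod by simp

lemma prod_split_pair:
  fixes z :: "'b \<Rightarrow> 'a::comm_monoid_mult"
  assumes "finite S" "a \<noteq> b"
  shows "(\<Prod>j\<in>S. z j) = (if a \<in> S then z a else 1) * (if b \<in> S then z b else 1) * (\<Prod>j\<in>S-{a,b}. z j)"
proof -
  have "(\<Prod>j\<in>S. z j) = (\<Prod>j\<in>S \<inter> {a,b}. z j) * (\<Prod>j\<in>S-{a,b}. z j)"
    using assms(1) by (metis Int_Diff_Un Int_Diff_disjoint finite_Diff finite_Int prod.union_disjoint)
  moreover have "(\<Prod>j\<in>S \<inter> {a,b}. z j) = (if a \<in> S then z a else 1) * (if b \<in> S then z b else 1)"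
    using assms(2) by (cases "a \<in> S"; cases "b \<in> S") (auto simp: Int_insert_right)
  ultimately show ?thesis by simp
qed

lemma partition_eval_decomp:
  fixes z :: "nat \<Rightarrow> 'a::real_normed_field"
  assumes "a \<noteq> b"
  shows "partition_eval n mu z = partition_coeff n mu a b False False z + z a * partition_coeff n mu a b True False z
     + z b * partition_coeff n mu a b False True z + z a * z b * partition_coeff n mu a b True True z"
proof -
  let ?T = "\<lambda>S. of_real (mu S) * (\<Prod>j\<in>S-{a,b}. z j)"
  have coeff: "partition_coeff n mu a b p q z = (\<Sum>S\<in>Pow {1..n}. if (a \<in> S) = p \<and> (b \<in> S) = q then ?T S else 0)" for p q
    unfolding partition_coeff_def by (rule sum.inter_filter) simp
  have "partition_eval n mu z
      = (\<Sum>S\<in>Pow {1..n}. (if a \<in> S then z a else 1) * (if b \<in> S then z b else 1) * ?T S)"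
    unfolding partition_eval_def
    by (intro sum.cong refl, subst prod_split_pair[OF _ assms]) (auto intro: finite_subset simp: ac_simps)
  then show ?thesis
    unfolding coeff sum_distrib_left sum.distrib[symmetric] by (auto intro: sum.cong)
qed

lemma strong_rayleigh_coeff_Im_nonneg:
  fixes z :: "nat \<Rightarrow> complex"
  assumes sr: "strong_rayleigh n mu" and ab: "a \<in> {1..n}" "b \<in> {1..n}" "a \<noteq> b"
    and upper: "\<And>j. j \<in> {1..n} \<Longrightarrow> j \<noteq> a \<Longrightarrow> j \<noteq> b \<Longrightarrow> Im (z j) > 0"
  shows "Im ((partition_coeff n mu a b False False z + \<i> * partition_coeff n mu a b False True z)
           * cnj (partition_coeff n mu a b True False z + \<i> * partition_coeff n mu a b True True z)) \<ge> 0"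
proof (rule ccontr)
  define al where "al = partition_coeff n mu a b False False z + \<i> * partition_coeff n mu a b False True z"
  define be where "be = partition_coeff n mu a b True False z + \<i> * partition_coeff n mu a b True True z"
  assume "\<not> ?thesis"
  then have neg: "Im (al * cnj be) < 0" unfolding al_def be_def by simp
  then have be: "be \<noteq> 0" by auto
  define w where "w = - al / be"
  have "Im w = - Im (al * cnj be) / (norm be)\<^sup>2"
    unfolding w_def complex_div_cnj[of "- al"] by (simp add: diff_divide_distrib)
  then have "Im w > 0" using neg be by (simp add: divide_pos_pos)
  then have "partition_fn n mu (z(a := w, b := \<i>)) \<noteq> 0"
    using sr upper ab(3) unfolding strong_rayleigh_def by auto
  moreover have "partition_coeff n mu a b p q (z(a := w, b := \<i>)) = partition_coeff n mu a b p q z" for p q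
    by (rule partition_coeff_cong) simp
  then have "partition_fn n mu (z(a := w, b := \<i>)) = al + w * be"
    unfolding partition_fn_def partition_eval_def[symmetric] partition_eval_decomp[OF ab(3)] al_def be_def
    using ab(3) by (simp add: algebra_simps)
  ultimately show False using be unfolding w_def by simp
qed

text \<open>Letting the imaginary parts tend to zero turns stability into the Rayleigh inequality
  for the four coefficients of the multi-affine polynomial in the variables a and b.\<close>
lemma strong_rayleigh_imp_rayleigh:
  fixes y :: "nat \<Rightarrow> real"
  assumes sr: "strong_rayleigh n mu" and ab: "a \<in> {1..n}" "b \<in> {1..n}" "a \<noteq> b"
  shows "partition_coeff n mu a b False False y * partition_coeff n mu a b True True y
     \<le> partition_coeff n mu a b True False y * partition_coeff n mu a b False True y"
proof -
  define C where "C e p q = partition_coeff n mu a b p q (\<lambda>j. complex_of_real (y j) + \<i> * complex_of_real e)"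
    for e p q
  define F where "F e = Im ((C e False False + \<i> * C e False True) * cnj (C e True False + \<i> * C e True True))"
    for e
  have "continuous_on UNIV F"
    unfolding F_def C_def partition_coeff_def by (intro continuous_intros)
  then have "(F \<longlongrightarrow> F 0) (at 0)"
    using continuous_on_eq_continuous_at isCont_def by blast
  then have "(F \<longlongrightarrow> F 0) (at_right 0)"
    by (rule tendsto_mono[OF at_le, rotated]) simp
  moreover have "\<forall>\<^sub>F e in at_right 0. F e \<ge> 0"
    using eventually_at_right_less unfolding F_def C_def
    by (rule eventually_mono) (intro strong_rayleigh_coeff_Im_nonneg[OF sr ab], simp)
  ultimately have "F 0 \<ge> 0" by (rule tendsto_lowerbound) simp
  then show ?thesis
    unfolding F_def C_def by (simp add: partition_coeff_of_real[where 'a=complex] algebra_simps)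
qed

lemma submodular_of_local_submodular:
  fixes h :: "'a set \<Rightarrow> 'b::ordered_ab_group_add"
  assumes fin: "finite E"
    and local: "\<And>Z a b. Z \<subseteq> E \<Longrightarrow> a \<in> E \<Longrightarrow> b \<in> E \<Longrightarrow> a \<notin> Z \<Longrightarrow> b \<notin> Z \<Longrightarrow> a \<noteq> b \<Longrightarrow>
      h (insert a (insert b Z)) + h Z \<le> h (insert a Z) + h (insert b Z)"
    and XY: "X \<subseteq> E" "Y \<subseteq> E"
  shows "h (X \<union> Y) + h (X \<inter> Y) \<le> h X + h Y"
proof -
  have marginal_antitone_point: "h (insert a (Z \<union> D)) - h (Z \<union> D) \<le> h (insert a Z) - h Z"
    if "finite D" "D \<subseteq> E" "Z \<subseteq> E" "a \<in> E" "a \<notin> Z \<union> D" for D Z a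
    using that
  proof (induction D rule: finite_induct)
    case (insert x D)
    have IH: "h (insert a (Z \<union> D)) - h (Z \<union> D) \<le> h (insert a Z) - h Z"
      using insert by auto
    show ?case
    proof (cases "x \<in> Z")
      case True
      then show ?thesis using IH by (simp add: insert_absorb)
    next
      case False
      have "h (insert a (insert x (Z \<union> D))) + h (Z \<union> D) \<le> h (insert a (Z \<union> D)) + h (insert x (Z \<union> D))"
        using insert False by (intro local) auto
      from add_mono[OF this IH[unfolded le_diff_eq diff_add_eq]] show ?thesis
        by (simp add: algebra_simps le_diff_eq diff_le_eq)
    qed
  qed simp
  have marginal_antitone: "h (X \<union> D) - h X \<le> h (Z \<union> D) - h Z"
    if "finite D" "D \<subseteq> E" "Z \<subseteq> X" "X \<subseteq> E" "D \<inter> X = {}" for D Z X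
    using that
  proof (induction D rule: finite_induct)
    case (insert x D)
    have IH: "h (X \<union> D) - h X \<le> h (Z \<union> D) - h Z" using insert by auto
    have "h (insert x ((Z \<union> D) \<union> (X - Z))) - h ((Z \<union> D) \<union> (X - Z)) \<le> h (insert x (Z \<union> D)) - h (Z \<union> D)"
      using insert fin by (intro marginal_antitone_point) (auto intro: finite_subset)
    moreover have "(Z \<union> D) \<union> (X - Z) = X \<union> D" using insert by auto
    ultimately have "h (insert x (X \<union> D)) - h (X \<union> D) \<le> h (insert x (Z \<union> D)) - h (Z \<union> D)"
      by simp
    from add_mono[OF this IH] show ?case by simp
  qed simp
  have "h (X \<union> (Y - X)) - h X \<le> h ((X \<inter> Y) \<union> (Y - X)) - h (X \<inter> Y)"
    using XY fin by (intro marginal_antitone) (auto intro: finite_subset)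
  moreover have "X \<union> (Y - X) = X \<union> Y" "(X \<inter> Y) \<union> (Y - X) = Y" by auto
  ultimately show ?thesis by (simp add: algebra_simps le_diff_eq diff_le_eq)
qed

definition tilted_partition :: "nat \<Rightarrow> (nat set \<Rightarrow> real) \<Rightarrow> real \<Rightarrow> nat set \<Rightarrow> real" where
  "tilted_partition n mu t Z = partition_eval n mu (\<lambda>j. if j \<in> Z then t else 1)"

lemma tilted_partition_eq_sum:
  "tilted_partition n mu t Z = (\<Sum>S\<in>Pow {1..n}. mu S * t ^ card (S \<inter> Z))"
  unfolding tilted_partition_def partition_eval_def
proof (rule sum.cong[OF refl])
  fix S assume "S \<in> Pow {1..n}"
  then have "finite S" by (auto intro: finite_subset)
  then have "(\<Prod>j\<in>S. if j \<in> Z then t else 1) = t ^ card (S \<inter> Z)"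
    by (simp add: prod.If_cases Int_def)
  then show "of_real (mu S) * (\<Prod>j\<in>S. if j \<in> Z then t else 1) = mu S * t ^ card (S \<inter> Z)" by simp
qed

lemma tilted_partition_ge_1:
  assumes pm: "prob_measure_on n mu" and t: "t \<ge> 1"
  shows "tilted_partition n mu t Z \<ge> 1"
proof -
  have "(\<Sum>S\<in>Pow {1..n}. mu S) \<le> (\<Sum>S\<in>Pow {1..n}. mu S * t ^ card (S \<inter> Z))"
    using pm t unfolding prob_measure_on_def by (intro sum_mono) (simp add: mult_le_cancel_left1 leD)
  then show ?thesis using pm unfolding tilted_partition_eq_sum prob_measure_on_def by simp
qed

lemma tilted_partition_local_log_submodular:
  assumes sr: "strong_rayleigh n mu" and t: "t \<ge> 1"
    and ab: "a \<in> {1..n}" "b \<in> {1..n}" "a \<notin> Z" "b \<notin> Z" "a \<noteq> b"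
  shows "tilted_partition n mu t (insert a (insert b Z)) * tilted_partition n mu t Z
     \<le> tilted_partition n mu t (insert a Z) * tilted_partition n mu t (insert b Z)"
proof -
  define c where "c p q = partition_coeff n mu a b p q (\<lambda>j. if j \<in> Z then t else (1::real))" for p q
  have expand: "tilted_partition n mu t W = c False False + (if a \<in> W then t else 1) * c True False
     + (if b \<in> W then t else 1) * c False True + (if a \<in> W then t else 1) * (if b \<in> W then t else 1) * c True True"
    if "W - {a,b} = Z" for W
  proof -
    have "partition_coeff n mu a b p q (\<lambda>j. if j \<in> W then t else 1) = c p q" for p q
      unfolding c_def by (rule partition_coeff_cong) (use that in auto)
    then show ?thesis unfolding tilted_partition_def partition_eval_decomp[OF ab(5)] by simp
  qed
  have "insert a (insert b Z) - {a,b} = Z" "Z - {a,b} = Z" "insert a Z - {a,b} = Z" "insert b Z - {a,b} = Z"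
    using ab by auto
  then have "tilted_partition n mu t (insert a Z) * tilted_partition n mu t (insert b Z)
      - tilted_partition n mu t (insert a (insert b Z)) * tilted_partition n mu t Z
     = (t - 1)\<^sup>2 * (c True False * c False True - c False False * c True True)"
    using ab by (simp add: expand algebra_simps power2_eq_square)
  moreover have "c False False * c True True \<le> c True False * c False True"
    unfolding c_def by (rule strong_rayleigh_imp_rayleigh[OF sr ab(1,2,5)])
  then have "(t - 1)\<^sup>2 * (c True False * c False True - c False False * c True True) \<ge> 0" by simp
  ultimately show ?thesis by linarith
qed

lemma tilted_partition_log_submodular:
  assumes pm: "prob_measure_on n mu" and sr: "strong_rayleigh n mu" and t: "t \<ge> 1"
    and XY: "X \<subseteq> {1..n}" "Y \<subseteq> {1..n}"
  shows "tilted_partition n mu t (X \<union> Y) * tilted_partition n mu t (X \<inter> Y)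
     \<le> tilted_partition n mu t X * tilted_partition n mu t Y"
proof -
  have pos: "tilted_partition n mu t Z > 0" for Z
    using tilted_partition_ge_1[OF pm t] by (rule less_le_trans[OF zero_less_one])
  have "ln (tilted_partition n mu t (X \<union> Y)) + ln (tilted_partition n mu t (X \<inter> Y))
      \<le> ln (tilted_partition n mu t X) + ln (tilted_partition n mu t Y)"
    using XY by (intro submodular_of_local_submodular[of "{1..n}"])
      (simp_all add: ln_mult_pos[OF pos pos, symmetric] pos
        tilted_partition_local_log_submodular[OF sr t])
  then show ?thesis by (simp add: ln_mult_pos[OF pos pos, symmetric] pos)
qed

definition matroid_rank :: "'a set \<Rightarrow> ('a set \<Rightarrow> nat) \<Rightarrow> bool" where
  "matroid_rank G r \<longleftrightarrow> r {} = 0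
     \<and> (\<forall>X Y. X \<subseteq> Y \<longrightarrow> Y \<subseteq> G \<longrightarrow> r X \<le> r Y)
     \<and> (\<forall>X x. X \<subseteq> G \<longrightarrow> x \<in> G \<longrightarrow> r (insert x X) \<le> r X + 1)
     \<and> (\<forall>X Y. X \<subseteq> G \<longrightarrow> Y \<subseteq> G \<longrightarrow> r (X \<union> Y) + r (X \<inter> Y) \<le> r X + r Y)"

lemma matroid_rank_empty: "matroid_rank G r \<Longrightarrow> r {} = 0"
  by (simp add: matroid_rank_def)

lemma matroid_rank_mono: "matroid_rank G r \<Longrightarrow> X \<subseteq> Y \<Longrightarrow> Y \<subseteq> G \<Longrightarrow> r X \<le> r Y"
  by (simp add: matroid_rank_def)

lemma matroid_rank_insert_le: "matroid_rank G r \<Longrightarrow> X \<subseteq> G \<Longrightarrow> x \<in> G \<Longrightarrow> r (insert x X) \<le> r X + 1"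
  by (simp add: matroid_rank_def)

lemma matroid_rank_submodular:
  "matroid_rank G r \<Longrightarrow> X \<subseteq> G \<Longrightarrow> Y \<subseteq> G \<Longrightarrow> r (X \<union> Y) + r (X \<inter> Y) \<le> r X + r Y"
  by (simp add: matroid_rank_def)

definition support_rank :: "nat \<Rightarrow> (nat set \<Rightarrow> real) \<Rightarrow> nat set \<Rightarrow> nat" where
  "support_rank n mu X = Max ((\<lambda>S. card (S \<inter> X)) ` support n mu)"

lemma finite_support: "finite (support n mu)"
  unfolding support_def by (rule finite_subset[of _ "Pow {1..n}"]) auto

lemma finite_mem_support: "S \<in> support n mu \<Longrightarrow> finite S"
  unfolding support_def by (auto intro: finite_subset)

lemma card_mem_support: "constant_sum n mu d \<Longrightarrow> S \<in> support n mu \<Longrightarrow> card S = d"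
  unfolding support_def constant_sum_def by auto

lemma support_nonempty:
  assumes pm: "prob_measure_on n mu"
  shows "support n mu \<noteq> {}"
proof
  assume "support n mu = {}"
  with pm have "\<forall>S\<in>Pow {1..n}. mu S = 0"
    unfolding support_def prob_measure_on_def by (auto simp: less_le)
  with pm show False unfolding prob_measure_on_def by simp
qed

lemma card_Int_le_support_rank: "S \<in> support n mu \<Longrightarrow> card (S \<inter> X) \<le> support_rank n mu X"
  unfolding support_rank_def by (rule Max_ge) (use finite_support in auto)

lemma support_rank_attained:
  assumes "prob_measure_on n mu"
  obtains S where "S \<in> support n mu" "card (S \<inter> X) = support_rank n mu X"
proof -
  have "support_rank n mu X \<in> (\<lambda>S. card (S \<inter> X)) ` support n mu"
    unfolding support_rank_def by (rule Max_in) (use finite_support support_nonempty[OF assms] in auto)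
  then show ?thesis using that by auto
qed

lemma support_rank_le_card:
  assumes "prob_measure_on n mu" "finite X"
  shows "support_rank n mu X \<le> card X"
proof -
  obtain S where "S \<in> support n mu" "card (S \<inter> X) = support_rank n mu X"
    using support_rank_attained[OF assms(1)] .
  with assms(2) show ?thesis using card_mono[of X "S \<inter> X"] by simp
qed

lemma support_rank_le_constant_sum:
  assumes "prob_measure_on n mu" "constant_sum n mu d"
  shows "support_rank n mu X \<le> d"
proof -
  obtain S where S: "S \<in> support n mu" "card (S \<inter> X) = support_rank n mu X"
    using support_rank_attained[OF assms(1)] .
  with card_mono[OF finite_mem_support[OF S(1)], of "S \<inter> X"] show ?thesis
    using card_mem_support[OF assms(2) S(1)] by simp
qed

lemma mem_support_of_support_rank_eq_card:
  assumes pm: "prob_measure_on n mu" and cs: "constant_sum n mu d"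
    and X: "finite X" "card X = d" "support_rank n mu X = d"
  shows "X \<in> support n mu"
proof -
  obtain S where S: "S \<in> support n mu" "card (S \<inter> X) = d"
    using support_rank_attained[OF pm] X(3) by metis
  have "S \<inter> X = S"
    using S card_mem_support[OF cs S(1)] finite_mem_support[OF S(1)] by (intro card_subset_eq) auto
  moreover have "S \<inter> X = X"
    using S X by (intro card_subset_eq) auto
  ultimately show ?thesis using S(1) by simp
qed

lemma tilted_partition_le_power_support_rank:
  assumes pm: "prob_measure_on n mu" and t: "t \<ge> 1"
  shows "tilted_partition n mu t X \<le> t ^ support_rank n mu X"
proof -
  have "tilted_partition n mu t X \<le> (\<Sum>S\<in>Pow {1..n}. mu S * t ^ support_rank n mu X)"
    unfolding tilted_partition_eq_sum
  proof (rule sum_mono)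
    fix S assume S: "S \<in> Pow {1..n}"
    then have "mu S \<ge> 0" using pm unfolding prob_measure_on_def by auto
    moreover have "t ^ card (S \<inter> X) \<le> t ^ support_rank n mu X" if "mu S > 0"
      using S that t card_Int_le_support_rank[of S n mu X] unfolding support_def
      by (intro power_increasing) auto
    ultimately show "mu S * t ^ card (S \<inter> X) \<le> mu S * t ^ support_rank n mu X"
      by (cases "mu S = 0") (auto intro: mult_left_mono)
  qed
  also have "\<dots> = t ^ support_rank n mu X"
    using pm unfolding prob_measure_on_def by (simp add: sum_distrib_right[symmetric])
  finally show ?thesis .
qed

lemma tilted_partition_ge_term:
  assumes pm: "prob_measure_on n mu" and t: "t \<ge> 0" and S: "S \<in> support n mu"
  shows "mu S * t ^ card (S \<inter> X) \<le> tilted_partition n mu t X"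
  unfolding tilted_partition_eq_sum
proof (rule member_le_sum)
  show "S \<in> Pow {1..n}" using S unfolding support_def by auto
  fix T assume "T \<in> Pow {1..n} - {S}"
  then show "0 \<le> mu T * t ^ card (T \<inter> X)" using pm t unfolding prob_measure_on_def by auto
qed simp

text \<open>For large t the tilted partition function is of order t to the rank, so its
  log-submodularity forces submodularity of the rank: a defect of one in the exponent would
  beat the constant factor mu S1 * mu S2.\<close>
lemma support_rank_submodular:
  assumes pm: "prob_measure_on n mu" and sr: "strong_rayleigh n mu"
    and XY: "X \<subseteq> {1..n}" "Y \<subseteq> {1..n}"
  shows "support_rank n mu (X \<union> Y) + support_rank n mu (X \<inter> Y) \<le> support_rank n mu X + support_rank n mu Y"
proof (rule ccontr)
  let ?r = "support_rank n mu" and ?g = "tilted_partition n mu"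
  assume "\<not> ?thesis"
  then have defect: "?r X + ?r Y + 1 \<le> ?r (X \<union> Y) + ?r (X \<inter> Y)" by simp
  obtain S1 where S1: "S1 \<in> support n mu" "card (S1 \<inter> (X \<union> Y)) = ?r (X \<union> Y)"
    using support_rank_attained[OF pm] .
  obtain S2 where S2: "S2 \<in> support n mu" "card (S2 \<inter> (X \<inter> Y)) = ?r (X \<inter> Y)"
    using support_rank_attained[OF pm] .
  define c where "c = mu S1 * mu S2"
  have c: "c > 0" using S1 S2 unfolding c_def support_def by auto
  define t where "t = 2 / c + 1"
  have t: "t \<ge> 1" using c unfolding t_def by simp
  have g_nonneg: "?g t Z \<ge> 0" for Z using tilted_partition_ge_1[OF pm t, of Z] by simp
  define m where "m = ?r X + ?r Y"
  have "c * t ^ (m + 1) \<le> c * t ^ (?r (X \<union> Y) + ?r (X \<inter> Y))"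
    using c t defect unfolding m_def by (intro mult_left_mono power_increasing) auto
  also have "\<dots> = (mu S1 * t ^ card (S1 \<inter> (X \<union> Y))) * (mu S2 * t ^ card (S2 \<inter> (X \<inter> Y)))"
    unfolding c_def S1(2) S2(2) by (simp add: power_add algebra_simps)
  also have "\<dots> \<le> ?g t (X \<union> Y) * ?g t (X \<inter> Y)"
    using tilted_partition_ge_term[OF pm _ S1(1)] tilted_partition_ge_term[OF pm _ S2(1)] S2(1) t g_nonneg
    unfolding support_def by (intro mult_mono) auto
  also have "\<dots> \<le> ?g t X * ?g t Y" by (rule tilted_partition_log_submodular[OF pm sr t XY])
  also have "\<dots> \<le> t ^ ?r X * t ^ ?r Y"
    using tilted_partition_le_power_support_rank[OF pm t] g_nonneg t by (intro mult_mono) auto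
  also have "\<dots> = t ^ m" unfolding m_def by (simp add: power_add)
  finally have "(c * t) * t ^ m \<le> 1 * t ^ m" by (simp add: algebra_simps)
  then have "c * t \<le> 1" using t by (subst (asm) mult_le_cancel_right) auto
  moreover have "c * t = 2 + c" using c unfolding t_def by (simp add: field_simps)
  ultimately show False using c by simp
qed

lemma matroid_rank_support_rank:
  assumes pm: "prob_measure_on n mu" and sr: "strong_rayleigh n mu"
  shows "matroid_rank {1..n} (support_rank n mu)"
  unfolding matroid_rank_def
proof (intro conjI allI impI)
  show "support_rank n mu {} = 0" using support_rank_le_card[OF pm, of "{}"] by simp
next
  fix X Y :: "nat set" assume "X \<subseteq> Y"
  obtain S where S: "S \<in> support n mu" "card (S \<inter> X) = support_rank n mu X"
    using support_rank_attained[OF pm] .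
  have "card (S \<inter> X) \<le> card (S \<inter> Y)"
    using finite_mem_support[OF S(1)] \<open>X \<subseteq> Y\<close> by (intro card_mono) auto
  then show "support_rank n mu X \<le> support_rank n mu Y"
    using S card_Int_le_support_rank[OF S(1), of Y] by simp
next
  fix X :: "nat set" and x
  obtain S where S: "S \<in> support n mu" "card (S \<inter> insert x X) = support_rank n mu (insert x X)"
    using support_rank_attained[OF pm] .
  have "card (S \<inter> insert x X) \<le> card (insert x (S \<inter> X))"
    using finite_mem_support[OF S(1)] by (intro card_mono) auto
  also have "\<dots> \<le> card (S \<inter> X) + 1"
    using finite_mem_support[OF S(1)] by (simp add: card_insert_if)
  finally show "support_rank n mu (insert x X) \<le> support_rank n mu X + 1"
    using S card_Int_le_support_rank[OF S(1), of X] by simp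
qed (rule support_rank_submodular[OF pm sr])

lemma matroid_rank_subset:
  assumes r: "matroid_rank G r" and "G' \<subseteq> G"
  shows "matroid_rank G' r"
  using assms unfolding matroid_rank_def by (meson order_trans subsetD)

lemma matroid_rank_singleton_le_1: "matroid_rank G r \<Longrightarrow> e \<in> G \<Longrightarrow> r {e} \<le> 1"
  using matroid_rank_insert_le[of G r "{}" e] matroid_rank_empty[of G r] by simp

lemma matroid_rank_insert_le_add_singleton:
  assumes r: "matroid_rank G r" and "e \<in> G" "X \<subseteq> G" "e \<notin> X"
  shows "r (insert e X) \<le> r X + r {e}"
  using matroid_rank_submodular[OF r, of X "{e}"] matroid_rank_empty[OF r] assms by simp

lemma matroid_rank_contract:
  assumes r: "matroid_rank G r" and e: "e \<in> G" and re: "r {e} = 1"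
  shows "matroid_rank (G - {e}) (\<lambda>X. r (insert e X) - 1)"
proof -
  have ge: "r (insert e X) \<ge> 1" if "X \<subseteq> G" for X
    using matroid_rank_mono[OF r, of "{e}" "insert e X"] e that re by simp
  show ?thesis unfolding matroid_rank_def
  proof (intro conjI allI impI)
    fix X Y assume "X \<subseteq> Y" "Y \<subseteq> G - {e}"
    then show "r (insert e X) - 1 \<le> r (insert e Y) - 1"
      using e by (intro diff_le_mono matroid_rank_mono[OF r]) auto
  next
    fix X x assume h: "X \<subseteq> G - {e}" "x \<in> G - {e}"
    have "r (insert x (insert e X)) \<le> r (insert e X) + 1"
      using h e by (intro matroid_rank_insert_le[OF r]) auto
    then show "r (insert e (insert x X)) - 1 \<le> r (insert e X) - 1 + 1"
      using ge[of X] h by (simp add: insert_commute)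
  next
    fix X Y assume h: "X \<subseteq> G - {e}" "Y \<subseteq> G - {e}"
    then have "X \<union> Y \<subseteq> G" "X \<inter> Y \<subseteq> G" by auto
    note ge[OF this(1)] ge[OF this(2)]
    moreover have "r (insert e X \<union> insert e Y) + r (insert e X \<inter> insert e Y) \<le> r (insert e X) + r (insert e Y)"
      using h e by (intro matroid_rank_submodular[OF r]) auto
    ultimately show "r (insert e (X \<union> Y)) - 1 + (r (insert e (X \<inter> Y)) - 1) \<le> r (insert e X) - 1 + (r (insert e Y) - 1)"
      by simp
  qed (use re in simp)
qed

context
  fixes G' X0 :: "'a set" and e :: 'a and r1 r2 :: "'a set \<Rightarrow> nat" and m :: nat
  assumes r1: "matroid_rank (insert e G') r1" and r2: "matroid_rank (insert e G') r2"
    and e: "e \<notin> G'"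
    and bound: "\<And>X. X \<subseteq> insert e G' \<Longrightarrow> m \<le> r1 X + r2 (insert e G' - X)"
    and X0: "X0 \<subseteq> G'" "r1 X0 + r2 (G' - X0) < m"
begin

lemma min_max_violation_rank_singleton:
  shows "r1 {e} = 1" and "r2 {e} = 1"
proof -
  have eX0: "e \<notin> X0" using X0 e by auto
  have "insert e G' - insert e X0 = G' - X0" using e by auto
  then have "m \<le> r1 (insert e X0) + r2 (G' - X0)"
    using bound[of "insert e X0"] X0 by auto
  moreover have "r1 (insert e X0) \<le> r1 X0 + r1 {e}"
    using X0 eX0 by (intro matroid_rank_insert_le_add_singleton[OF r1]) auto
  ultimately show "r1 {e} = 1"
    using X0 matroid_rank_singleton_le_1[OF r1 insertI1] by linarith
next
  have eX0: "e \<notin> X0" using X0 e by auto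
  have "insert e G' - X0 = insert e (G' - X0)" using eX0 by auto
  then have "m \<le> r1 X0 + r2 (insert e (G' - X0))"
    using bound[of X0] X0 by auto
  moreover have "r2 (insert e (G' - X0)) \<le> r2 (G' - X0) + r2 {e}"
    using e by (intro matroid_rank_insert_le_add_singleton[OF r2]) auto
  ultimately show "r2 {e} = 1"
    using X0 matroid_rank_singleton_le_1[OF r2 insertI1] by linarith
qed

text \<open>Uncrossing the violating set X0 with a hypothetical violating set Y0 of the contracted
  problem, via submodularity of r1 and of r2 on complements, contradicts the bound.\<close>
lemma min_max_bound_contract:
  assumes Y: "Y \<subseteq> G'"
  shows "m - 1 \<le> (r1 (insert e Y) - 1) + (r2 (insert e (G' - Y)) - 1)"
proof (rule ccontr)
  let ?G = "insert e G'"
  assume "\<not> ?thesis"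
  moreover have "r1 (insert e Y) \<ge> 1" "r2 (insert e (G' - Y)) \<ge> 1"
    using matroid_rank_mono[OF r1, of "{e}" "insert e Y"] matroid_rank_mono[OF r2, of "{e}" "insert e (G' - Y)"]
      Y min_max_violation_rank_singleton by auto
  ultimately have "r1 (insert e Y) + r2 (insert e (G' - Y)) \<le> m" by linarith
  moreover have "insert e (G' - Y) = ?G - Y" using Y e by auto
  ultimately have violation: "r1 (insert e Y) + r2 (?G - Y) \<le> m" by simp
  have "X0 \<union> insert e Y = insert e (X0 \<union> Y)" "X0 \<inter> insert e Y = X0 \<inter> Y"
    using X0 e by auto
  with matroid_rank_submodular[OF r1, of X0 "insert e Y"]
  have uncross1: "r1 (insert e (X0 \<union> Y)) + r1 (X0 \<inter> Y) \<le> r1 X0 + r1 (insert e Y)"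
    using X0 Y by auto
  have "(G' - X0) \<union> (?G - Y) = ?G - (X0 \<inter> Y)" "(G' - X0) \<inter> (?G - Y) = ?G - insert e (X0 \<union> Y)"
    using Y e by auto
  with matroid_rank_submodular[OF r2, of "G' - X0" "?G - Y"]
  have uncross2: "r2 (?G - (X0 \<inter> Y)) + r2 (?G - insert e (X0 \<union> Y)) \<le> r2 (G' - X0) + r2 (?G - Y)"
    by auto
  have "m \<le> r1 (X0 \<inter> Y) + r2 (?G - (X0 \<inter> Y))" "m \<le> r1 (insert e (X0 \<union> Y)) + r2 (?G - insert e (X0 \<union> Y))"
    using X0 Y by (intro bound; auto)+
  with uncross1 uncross2 show False using X0(2) violation by linarith
qed

end

theorem matroid_intersection:
  assumes "finite G" "matroid_rank G r1" "matroid_rank G r2" "\<And>X. X \<subseteq> G \<Longrightarrow> m \<le> r1 X + r2 (G - X)"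
  shows "\<exists>I\<subseteq>G. r1 I = card I \<and> r2 I = card I \<and> m \<le> card I"
  using assms
proof (induction G arbitrary: r1 r2 m rule: finite_induct)
  case empty
  then have "m \<le> r1 {} + r2 {}" by simp
  with empty.prems show ?case by (simp add: matroid_rank_empty)
next
  case (insert e G')
  let ?G = "insert e G'"
  show ?case
  proof (cases "\<forall>X\<subseteq>G'. m \<le> r1 X + r2 (G' - X)")
    case True
    have "matroid_rank G' r1" "matroid_rank G' r2"
      using insert.prems(1,2) by (auto intro: matroid_rank_subset)
    then have "\<exists>I\<subseteq>G'. r1 I = card I \<and> r2 I = card I \<and> m \<le> card I"
      by (rule insert.IH) (use True in blast)
    then show ?thesis by blast
  next
    case False
    then obtain X0 where X0: "X0 \<subseteq> G'" "r1 X0 + r2 (G' - X0) < m" by (auto simp: not_le)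
    note violation = insert.prems(1,2) insert.hyps(2) insert.prems(3) X0
    have r1e: "r1 {e} = 1" and r2e: "r2 {e} = 1"
      using min_max_violation_rank_singleton[OF violation] by auto
    have "matroid_rank G' (\<lambda>X. r1 (insert e X) - 1)" "matroid_rank G' (\<lambda>X. r2 (insert e X) - 1)"
      using matroid_rank_contract[OF insert.prems(1) _ r1e] matroid_rank_contract[OF insert.prems(2) _ r2e]
        insert.hyps(2) by simp_all
    from insert.IH[OF this min_max_bound_contract[OF violation]]
    obtain I where I: "I \<subseteq> G'" "r1 (insert e I) - 1 = card I" "r2 (insert e I) - 1 = card I"
        "m - 1 \<le> card I"
      by blast
    have "finite I" "e \<notin> I" using I(1) insert.hyps finite_subset by auto
    then have "card (insert e I) = card I + 1" by simp
    moreover have "r1 {e} \<le> r1 (insert e I)" "r2 {e} \<le> r2 (insert e I)"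
      using I(1) by (intro matroid_rank_mono[OF insert.prems(1)] matroid_rank_mono[OF insert.prems(2)]; auto)+
    ultimately have "r1 (insert e I) = card (insert e I)" "r2 (insert e I) = card (insert e I)"
        "m \<le> card (insert e I)"
      using I r1e r2e by linarith+
    then show ?thesis using I(1) by (intro exI[of _ "insert e I"]) auto
  qed
qed

lemma matroid_rank_le_card:
  assumes r: "matroid_rank G r" and X: "finite X" "X \<subseteq> G"
  shows "r X \<le> card X"
  using X
proof (induction X rule: finite_induct)
  case (insert x X)
  then show ?case using matroid_rank_insert_le[OF r, of X x] by simp
qed (simp add: matroid_rank_empty[OF r])

lemma matroid_rank_card_image:
  assumes "finite G"
  shows "matroid_rank G (\<lambda>X. card (f ` X))"
  unfolding matroid_rank_def
proof (intro conjI allI impI)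
  fix X Y assume "X \<subseteq> G" "Y \<subseteq> G"
  then have fin: "finite (f ` X)" "finite (f ` Y)" using assms by (auto intro: finite_subset)
  have "card (f ` (X \<inter> Y)) \<le> card (f ` X \<inter> f ` Y)" using fin by (intro card_mono) auto
  then show "card (f ` (X \<union> Y)) + card (f ` (X \<inter> Y)) \<le> card (f ` X) + card (f ` Y)"
    using card_Un_Int[OF fin] by (simp add: image_Un)
next
  fix X x assume "X \<subseteq> G"
  then have "finite (f ` X)" using assms by (auto intro: finite_subset)
  then show "card (f ` insert x X) \<le> card (f ` X) + 1" by (simp add: card_insert_if)
qed (use assms in \<open>auto intro: card_mono finite_subset\<close>)

definition slice :: "('i \<times> 'a) set \<Rightarrow> 'i \<Rightarrow> 'a set" where
  "slice X i = {e. (i, e) \<in> X}"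

definition copies_rank :: "nat \<Rightarrow> ('a set \<Rightarrow> nat) \<Rightarrow> (nat \<times> 'a) set \<Rightarrow> nat" where
  "copies_rank k r X = (\<Sum>i<k. r (slice X i))"

lemma slice_subset: "X \<subseteq> I \<times> E \<Longrightarrow> slice X i \<subseteq> E"
  unfolding slice_def by auto

lemma matroid_rank_copies:
  assumes r: "matroid_rank E r"
  shows "matroid_rank ({..<k} \<times> E) (copies_rank k r)"
  unfolding matroid_rank_def
proof (intro conjI allI impI)
  show "copies_rank k r {} = 0"
    unfolding copies_rank_def slice_def by (simp add: matroid_rank_empty[OF r])
next
  fix X Y assume "X \<subseteq> Y" "Y \<subseteq> {..<k} \<times> E"
  then show "copies_rank k r X \<le> copies_rank k r Y"
    unfolding copies_rank_def
    by (intro sum_mono matroid_rank_mono[OF r] slice_subset[of Y]) (auto simp: slice_def)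
next
  fix X x assume h: "X \<subseteq> {..<k} \<times> E" "x \<in> {..<k} \<times> E"
  obtain i0 e0 where x: "x = (i0, e0)" "i0 < k" "e0 \<in> E" using h(2) by auto
  have "r (slice (insert x X) i) \<le> r (slice X i) + (if i = i0 then 1 else 0)" for i
  proof (cases "i = i0")
    case True
    then have "slice (insert x X) i = insert e0 (slice X i)" unfolding slice_def x by auto
    then show ?thesis
      using True matroid_rank_insert_le[OF r slice_subset[OF h(1)] x(3)] by simp
  qed (simp add: slice_def x)
  then have "copies_rank k r (insert x X) \<le> (\<Sum>i<k. r (slice X i) + (if i = i0 then 1 else 0))"
    unfolding copies_rank_def by (intro sum_mono)
  also have "\<dots> = copies_rank k r X + 1" unfolding copies_rank_def sum.distrib using x(2) by simp
  finally show "copies_rank k r (insert x X) \<le> copies_rank k r X + 1" .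
next
  fix X Y assume h: "X \<subseteq> {..<k} \<times> E" "Y \<subseteq> {..<k} \<times> E"
  have "slice (X \<union> Y) i = slice X i \<union> slice Y i" "slice (X \<inter> Y) i = slice X i \<inter> slice Y i" for i
    unfolding slice_def by auto
  then have "copies_rank k r (X \<union> Y) + copies_rank k r (X \<inter> Y)
      = (\<Sum>i<k. r (slice X i \<union> slice Y i) + r (slice X i \<inter> slice Y i))"
    unfolding copies_rank_def sum.distrib by simp
  also have "\<dots> \<le> (\<Sum>i<k. r (slice X i) + r (slice Y i))"
    using h by (intro sum_mono matroid_rank_submodular[OF r] slice_subset)
  also have "\<dots> = copies_rank k r X + copies_rank k r Y" unfolding copies_rank_def sum.distrib ..
  finally show "copies_rank k r (X \<union> Y) + copies_rank k r (X \<inter> Y) \<le> copies_rank k r X + copies_rank k r Y" .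
qed

text \<open>The elements e lying in every slice of X form a set Z with k r(Z) bounded by the copies
  rank of X, and every other element of E is hit by the complement of X.\<close>
lemma copies_partition_min_max_bound:
  assumes r: "matroid_rank E r" and fin: "finite E"
    and bound: "\<And>Z. Z \<subseteq> E \<Longrightarrow> m \<le> k * r Z + card (E - Z)"
    and X: "X \<subseteq> {..<k} \<times> E"
  shows "m \<le> copies_rank k r X + card (snd ` ({..<k} \<times> E - X))"
proof -
  define Z where "Z = {e \<in> E. \<forall>i<k. (i, e) \<in> X}"
  have "k * r Z = (\<Sum>i<k. r Z)" by simp
  also have "\<dots> \<le> copies_rank k r X"
    unfolding copies_rank_def using X
    by (intro sum_mono matroid_rank_mono[OF r] slice_subset) (auto simp: Z_def slice_def)
  finally have "k * r Z \<le> copies_rank k r X" .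
  moreover have "E - Z \<subseteq> snd ` ({..<k} \<times> E - X)"
    unfolding Z_def by (auto intro: rev_image_eqI)
  then have "card (E - Z) \<le> card (snd ` ({..<k} \<times> E - X))" using fin by (intro card_mono) auto
  moreover have "Z \<subseteq> E" unfolding Z_def by auto
  ultimately show ?thesis using bound[of Z] by linarith
qed

text \<open>Edmonds' base packing theorem, derived from matroid intersection for k copies of the matroid
  against the partition matroid that allows each element of E to be used once.\<close>
theorem matroid_base_packing:
  fixes r :: "'a set \<Rightarrow> nat"
  assumes fin: "finite E" and r: "matroid_rank E r"
    and bound: "\<And>Z. Z \<subseteq> E \<Longrightarrow> k * r E \<le> k * r Z + card (E - Z)"
  shows "\<exists>B. (\<forall>i<k. B i \<subseteq> E \<and> card (B i) = r E \<and> r (B i) = r E)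
           \<and> (\<forall>i<k. \<forall>j<k. i \<noteq> j \<longrightarrow> B i \<inter> B j = {})"
proof -
  let ?G = "{..<k} \<times> E"
  have "\<exists>I\<subseteq>?G. copies_rank k r I = card I \<and> card (snd ` I) = card I \<and> k * r E \<le> card I"
    using fin copies_partition_min_max_bound[OF r fin bound]
    by (intro matroid_intersection matroid_rank_copies[OF r] matroid_rank_card_image) auto
  then obtain I where I: "I \<subseteq> ?G" "copies_rank k r I = card I" "card (snd ` I) = card I" "k * r E \<le> card I"
    by blast
  define B where "B i = slice I i" for i
  have BE: "B i \<subseteq> E" for i unfolding B_def using I(1) by (rule slice_subset)
  then have finB: "finite (B i)" for i using fin by (rule finite_subset)
  have "I = Sigma {..<k} B" using I(1) unfolding B_def slice_def by auto
  then have card_I: "card I = (\<Sum>i<k. card (B i))" using finB by (simp add: card_SigmaI)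
  have le_rE: "r (B i) \<le> r E" for i using BE by (intro matroid_rank_mono[OF r]) auto
  have le_card: "r (B i) \<le> card (B i)" for i using finB BE by (intro matroid_rank_le_card[OF r])
  have "(\<Sum>i<k. r E) \<le> (\<Sum>i<k. r (B i))" "(\<Sum>i<k. card (B i)) \<le> (\<Sum>i<k. r (B i))"
    using I(2,4) card_I unfolding copies_rank_def B_def by simp_all
  moreover have "(\<Sum>i<k. r (B i)) \<le> (\<Sum>i<k. r E)" "(\<Sum>i<k. r (B i)) \<le> (\<Sum>i<k. card (B i))"
    using le_rE le_card by (intro sum_mono; simp)+
  ultimately have sums: "(\<Sum>i<k. r (B i)) = (\<Sum>i<k. r E)" "(\<Sum>i<k. r (B i)) = (\<Sum>i<k. card (B i))"
    by (simp_all only: antisym)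
  have rank_B: "r (B i) = r E" "r (B i) = card (B i)" if "i < k" for i
    using sum_mono_inv[OF sums(1), of i] sum_mono_inv[OF sums(2), of i] that le_rE le_card by simp_all
  have "inj_on snd I"
    using I(1,3) fin by (intro eq_card_imp_inj_on) (auto intro: finite_subset)
  then have "B i \<inter> B j = {}" if "i \<noteq> j" for i j
    using that inj_onD[of snd I "(i, _)" "(j, _)"] unfolding B_def slice_def by fastforce
  then show ?thesis using BE rank_B by (intro exI[of _ B]) auto
qed

lemma sqrt_gap_sq_le_inverse:
  fixes x :: real
  assumes x: "x \<ge> 4 / 3"
  shows "(1 / sqrt (x - 1) - 1 / sqrt x)\<^sup>2 \<le> 1 / x"
proof -
  have pos: "sqrt (x - 1) > 0" "sqrt x > 0" using x by auto
  have "sqrt x \<le> sqrt 4 * sqrt (x - 1)"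
    unfolding real_sqrt_mult[symmetric] using x by (intro real_sqrt_le_mono) simp
  then have "sqrt x \<le> 2 * sqrt (x - 1)" by simp
  then have "1 / sqrt (x - 1) \<le> 2 / sqrt x" using pos by (simp add: field_simps)
  then have "1 / sqrt (x - 1) - 1 / sqrt x \<le> 1 / sqrt x" by simp
  moreover have "1 / sqrt x \<le> 1 / sqrt (x - 1)" using pos by (simp add: frac_le)
  ultimately have "(1 / sqrt (x - 1) - 1 / sqrt x)\<^sup>2 \<le> (1 / sqrt x)\<^sup>2" by (intro power_mono) auto
  also have "\<dots> = 1 / x" using x by (simp add: power_divide)
  finally show ?thesis .
qed

lemma sum_marginal_eq:
  assumes "finite A"
  shows "(\<Sum>e\<in>A. marginal n mu e) = (\<Sum>S\<in>Pow {1..n}. mu S * card (S \<inter> A))"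
proof -
  have "(\<Sum>e\<in>A. marginal n mu e) = (\<Sum>e\<in>A. \<Sum>S\<in>Pow {1..n}. if e \<in> S then mu S else 0)"
    unfolding marginal_def by (intro sum.cong refl sum.inter_filter) simp
  also have "\<dots> = (\<Sum>S\<in>Pow {1..n}. \<Sum>e\<in>A. if e \<in> S then mu S else 0)" by (rule sum.swap)
  also have "\<dots> = (\<Sum>S\<in>Pow {1..n}. mu S * card (S \<inter> A))"
    using assms by (simp add: sum.If_cases Int_def conj_commute mult.commute)
  finally show ?thesis .
qed

text \<open>Every set in the support has at least d - rank(Z) elements outside Z; averaging over mu
  bounds this deficit by the marginals outside Z.\<close>
lemma support_rank_deficit_le_sum_marginal:
  assumes pm: "prob_measure_on n mu" and cs: "constant_sum n mu d"
  shows "real d - support_rank n mu Z \<le> (\<Sum>e\<in>{1..n} - Z. marginal n mu e)"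
proof -
  have "real d - support_rank n mu Z \<le> card (S \<inter> ({1..n} - Z))" if "S \<in> support n mu" for S
  proof -
    have "card S = card (S \<inter> Z) + card (S \<inter> ({1..n} - Z))"
      using that finite_mem_support[OF that] unfolding support_def
      by (subst card_Int_Diff[of S Z]) (auto intro!: arg_cong[where f=card])
    then show ?thesis
      using card_mem_support[OF cs that] card_Int_le_support_rank[OF that, of Z] by linarith
  qed
  then have "(\<Sum>S\<in>Pow {1..n}. mu S * (real d - support_rank n mu Z))
      \<le> (\<Sum>S\<in>Pow {1..n}. mu S * card (S \<inter> ({1..n} - Z)))"
    using pm unfolding prob_measure_on_def support_def
    by (intro sum_mono) (auto intro: mult_left_mono simp: order.order_iff_strict[of 0 "mu _"])
  then show ?thesis
    using pm unfolding prob_measure_on_def by (simp add: sum_marginal_eq sum_distrib_right[symmetric])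
qed

lemma support_rank_covering_bound:
  assumes pm: "prob_measure_on n mu" and cs: "constant_sum n mu d" and k: "k > 0"
    and marg: "\<And>e. e \<in> {1..n} \<Longrightarrow> marginal n mu e \<le> 1 / real k"
  shows "k * d \<le> k * support_rank n mu Z + card ({1..n} - Z)"
proof -
  have "real d - support_rank n mu Z \<le> (\<Sum>e\<in>{1..n} - Z. marginal n mu e)"
    by (rule support_rank_deficit_le_sum_marginal[OF pm cs])
  also have "\<dots> \<le> (\<Sum>e\<in>{1..n} - Z. 1 / real k)"
    using marg by (intro sum_mono) simp
  finally have "real d - support_rank n mu Z \<le> card ({1..n} - Z) / real k" by simp
  then have "real k * (real d - support_rank n mu Z) \<le> card ({1..n} - Z)"
    using k by (simp add: field_simps del: of_nat_diff)
  then have "real (k * d) \<le> real (k * support_rank n mu Z + card ({1..n} - Z))"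
    by (simp add: algebra_simps)
  then show ?thesis by linarith
qed

lemma support_rank_ground:
  assumes pm: "prob_measure_on n mu" and cs: "constant_sum n mu d"
  shows "support_rank n mu {1..n} = d"
proof -
  obtain S where "S \<in> support n mu" using support_nonempty[OF pm] by blast
  then have "card (S \<inter> {1..n}) = d" using card_mem_support[OF cs] unfolding support_def
    by (simp add: Int_absorb2)
  then show ?thesis
    using card_Int_le_support_rank[OF \<open>S \<in> support n mu\<close>] support_rank_le_constant_sum[OF pm cs]
    by (metis le_antisym)
qed

theorem theorem8p2:
  fixes n k d :: nat and mu :: "nat set \<Rightarrow> real"
  assumes "k \<ge> 2"
    and "prob_measure_on n mu"
    and "strong_rayleigh n mu"
    and "constant_sum n mu d"
    and "\<forall>i\<in>{1..n}. marginal n mu i \<le> (1 / sqrt (real k - 1) - 1 / sqrt (real k))^2"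
  shows "\<exists>B :: nat \<Rightarrow> nat set. (\<forall>i<k. B i \<in> support n mu) \<and>
           (\<forall>i<k. \<forall>j<k. i \<noteq> j \<longrightarrow> B i \<inter> B j = {})"
proof -
  note k = assms(1) and pm = assms(2) and sr = assms(3) and cs = assms(4)
  have "marginal n mu e \<le> 1 / real k" if "e \<in> {1..n}" for e
    using assms(5) that sqrt_gap_sq_le_inverse[of "real k"] k by force
  then have "k * support_rank n mu {1..n} \<le> k * support_rank n mu Z + card ({1..n} - Z)" for Z
    unfolding support_rank_ground[OF pm cs] using k by (intro support_rank_covering_bound[OF pm cs]) auto
  from matroid_base_packing[OF finite_atLeastAtMost matroid_rank_support_rank[OF pm sr] this]
  obtain B where B: "\<forall>i<k. B i \<subseteq> {1..n} \<and> card (B i) = d \<and> support_rank n mu (B i) = d"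
      "\<forall>i<k. \<forall>j<k. i \<noteq> j \<longrightarrow> B i \<inter> B j = {}"
    unfolding support_rank_ground[OF pm cs] by blast
  have "B i \<in> support n mu" if "i < k" for i
    using B(1) that by (intro mem_support_of_support_rank_eq_card[OF pm cs]) (auto intro: finite_subset)
  then show ?thesis using B(2) by blast
qed

end
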